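(* Let $1\le m<n$. (a) If $m=1$, then for every $A\in\mathbb R^{1\times n}$ and all $0<p,q\le\infty$: $\mathrm{pginv}_{\mathrm{row}(p,q)}(A)=\mathrm{ginv}_q(A)$; consequently there is a full-rank $A_1\in\mathbb R^{1\times n}$ with $A_1^\dagger\in\mathrm{pginv}_{\mathrm{row}(p,q)}(A_1)\iff q=2$ for $0<p\le\infty$, $0<q<\infty$. (b) If $m\ge2$, there exists a full-rank $A_4\in\mathbb R^{m\times n}$ such that for all $1\le p<\infty$ and $0<q<\infty$: $A_4^\dagger\in\mathrm{pginv}_{\mathrm{row}(p,q)}(A_4)\iff q=2$. (c) If $m\ge3$, there exists a full-rank $A_5\in\mathbb R^{m\times n}$ such that for all $1\le p<\infty$ and $q=2$: $A_5^\dagger\in\mathrm{pginv}_{\mathrm{row}(p,2)}(A_5)\iff p=2$. (d) If $m\ge3$, $1\le p<\infty$ and $0<q<\infty$, then: $A^\dagger\in\mathrm{pginv}_{\mathrm{row}(p,q)}(A)$ for every full-rank $A\in\mathbb R^{m\times n}$ if and only if $(p,q)=(2,2)$.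
   Context: Generalized inverses are taken real: $\mathcal G(A)=\{X\in\mathbb R^{n\times m}:AX=I_m\}$, $\mathrm{ginv}_\nu(A)=\arg\min_{X\in\mathcal G(A)}\|X\|_\nu$, $\mathrm{pginv}_\mu(A)=\arg\min_{X\in\mathcal G(A)}\|XA\|_\mu$ (sets). For $M$ with rows $m^i$, $\|M\|_{\mathrm{row}(p,q)}=(\sum_i\|m^i\|_p^q)^{1/q}$ (maximum for $q=\infty$); entrywise $\|M\|_q=\|\mathrm{vec}(M)\|_q$. $A^\dagger=A^\top(AA^\top)^{-1}$. *)

theory Defs
  imports "HOL-Analysis.Analysis"
begin

definition lp_norm :: "ereal \<Rightarrow> real ^ 'k \<Rightarrow> real" where
  "lp_norm p v = (if p = \<infinity> then Max (range (\<lambda>j. \<bar>v $ j\<bar>))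
     else (\<Sum>j\<in>UNIV. \<bar>v $ j\<bar> powr real_of_ereal p) powr (1 / real_of_ereal p))"

definition row_norm :: "ereal \<Rightarrow> ereal \<Rightarrow> real ^ 'k ^ 'l \<Rightarrow> real" where
  "row_norm p q M = lp_norm q (\<chi> i. lp_norm p (M $ i))"

definition entry_norm :: "ereal \<Rightarrow> real ^ 'k ^ 'l \<Rightarrow> real" where
  "entry_norm q M = (if q = \<infinity> then Max (range (\<lambda>(i,j). \<bar>M $ i $ j\<bar>))
     else (\<Sum>(i,j)\<in>UNIV. \<bar>M $ i $ j\<bar> powr real_of_ereal q) powr (1 / real_of_ereal q))"

definition ginvs :: "real ^ 'n ^ 'm \<Rightarrow> (real ^ 'm ^ 'n) set" where
  "ginvs A = {X. A ** X = mat 1}"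

definition ginv :: "ereal \<Rightarrow> real ^ 'n ^ 'm \<Rightarrow> (real ^ 'm ^ 'n) set" where
  "ginv q A = {X \<in> ginvs A. \<forall>Y \<in> ginvs A. entry_norm q X \<le> entry_norm q Y}"

definition pginv_row :: "ereal \<Rightarrow> ereal \<Rightarrow> real ^ 'n ^ 'm \<Rightarrow> (real ^ 'm ^ 'n) set" where
  "pginv_row p q A = {X \<in> ginvs A. \<forall>Y \<in> ginvs A. row_norm p q (X ** A) \<le> row_norm p q (Y ** A)}"

definition pinv :: "real ^ 'n ^ 'm \<Rightarrow> real ^ 'm ^ 'n" where
  "pinv A = transpose A ** matrix_inv (A ** transpose A)"

definition full_rank :: "real ^ 'n ^ 'm \<Rightarrow> bool" where
  "full_rank A \<longleftrightarrow> rank A = min CARD('m) CARD('n)"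

end

theory Submission
  imports Defs
begin

text \<open>
  For finite \<open>p, q\<close> the row norm is an increasing function of
  \<open>\<Phi>(M) = \<Sum>\<^sub>i \<parallel>m\<^sup>i\<parallel>\<^sub>p\<^sup>q\<close>, so \<open>A\<^sup>\<dagger> \<in> pginv\<close> means that \<open>X \<mapsto> \<Phi>(XA)\<close> is minimal at
  \<open>A\<^sup>\<dagger>\<close> on the affine space of generalized inverses. For \<open>p = q = 2\<close>, \<open>\<Phi>\<close> is the squared
  Frobenius norm and \<open>A\<^sup>\<dagger>A\<close> is the orthogonal projector onto the row space of \<open>A\<close>, which
  gives optimality by Pythagoras. The negative results come from explicit lines \<open>X(t)\<close> of
  generalized inverses through \<open>X(0) = A\<^sup>\<dagger>\<close> along which \<open>t \<mapsto> \<Phi>(X(t)A)\<close> has nonzero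
  derivative at \<open>0\<close>: for \<open>A\<^sub>4 = [I | 2e\<^sub>1]\<close> the derivative is a nonzero multiple of
  \<open>2 - 2\<^sup>q\<^sup>-\<^sup>1\<close>, for \<open>A\<^sub>5\<close> its sign is decided by comparing the \<open>p\<close>-th power mean of
  \<open>5, 1, 2\<close> with their quadratic mean. For \<open>m = 1\<close> the product \<open>XA = x a\<^sup>T\<close> has rank one,
  so its row norm factors as \<open>\<parallel>a\<parallel>\<^sub>p \<parallel>x\<parallel>\<^sub>q\<close>.
\<close>

section \<open>Row norms through a root-free objective\<close>

definition abs_powr_sum :: "real \<Rightarrow> real ^ 'k \<Rightarrow> real" where
  "abs_powr_sum p v = (\<Sum>j\<in>UNIV. \<bar>v $ j\<bar> powr p)"

definition row_objective :: "real \<Rightarrow> real \<Rightarrow> real ^ 'k ^ 'l \<Rightarrow> real" where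
  "row_objective p q M = (\<Sum>i\<in>UNIV. abs_powr_sum p (M $ i) powr (q / p))"

lemma row_objective_nonneg: "0 \<le> row_objective p q M"
  unfolding row_objective_def by (intro sum_nonneg) auto

lemma row_norm_eq_row_objective:
  assumes "0 < p" "0 < q"
  shows "row_norm (ereal p) (ereal q) M = row_objective p q M powr (1 / q)"
proof -
  have "row_norm (ereal p) (ereal q) M
      = (\<Sum>i\<in>UNIV. \<bar>abs_powr_sum p (M $ i) powr (1 / p)\<bar> powr q) powr (1 / q)"
    by (simp add: row_norm_def lp_norm_def abs_powr_sum_def)
  also have "\<dots> = row_objective p q M powr (1 / q)"
    unfolding row_objective_def by (simp add: powr_powr)
  finally show ?thesis .
qed

lemma pginv_row_iff_row_objective:
  assumes "0 < p" "0 < q"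
  shows "X \<in> pginv_row (ereal p) (ereal q) A \<longleftrightarrow>
    X \<in> ginvs A \<and> (\<forall>Y\<in>ginvs A. row_objective p q (X ** A) \<le> row_objective p q (Y ** A))"
proof -
  have root_le_iff: "a powr (1 / q) \<le> b powr (1 / q) \<longleftrightarrow> a \<le> b" if "0 \<le> a" "0 \<le> b" for a b :: real
    using powr_less_mono2[of "1 / q" b a] powr_mono2[of "1 / q" a b] that assms by force
  show ?thesis
    unfolding pginv_row_def by (simp add: row_norm_eq_row_objective assms root_le_iff row_objective_nonneg)
qed

lemma row_objective_2_2: "row_objective 2 2 M = (\<Sum>i\<in>UNIV. \<Sum>j\<in>UNIV. (M $ i $ j)\<^sup>2)"
proof -
  have sq: "abs_powr_sum 2 v = (\<Sum>j\<in>UNIV. (v $ j)\<^sup>2)" for v :: "real ^ 'k"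
    by (simp add: abs_powr_sum_def powr_numeral)
  show ?thesis
    unfolding row_objective_def by (simp add: sq sum_nonneg)
qed

lemma matrix_inv_invertible:
  fixes M :: "'a::semiring_1 ^ 'n ^ 'm"
  assumes "invertible M"
  shows "M ** matrix_inv M = mat 1" "matrix_inv M ** M = mat 1"
proof -
  have "\<exists>M'. M ** M' = mat 1 \<and> M' ** M = mat 1"
    using assms unfolding invertible_def by blast
  then have "M ** matrix_inv M = mat 1 \<and> matrix_inv M ** M = mat 1"
    unfolding matrix_inv_def by (rule someI_ex)
  then show "M ** matrix_inv M = mat 1" "matrix_inv M ** M = mat 1" by auto
qed

lemma matrix_inv_eqI:
  fixes M N :: "'a::field ^ 'n ^ 'n"
  assumes "M ** N = mat 1"
  shows "matrix_inv M = N"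
proof -
  have "invertible M" using assms invertible_right_inverse by blast
  have "matrix_inv M = matrix_inv M ** (M ** N)" using assms by simp
  also have "\<dots> = (matrix_inv M ** M) ** N" by (simp add: matrix_mul_assoc)
  also have "\<dots> = N" using matrix_inv_invertible[OF \<open>invertible M\<close>] by simp
  finally show ?thesis .
qed

lemma full_rank_iff_invertible_gram:
  fixes A :: "real ^ 'n ^ 'm"
  assumes "CARD('m) \<le> CARD('n)"
  shows "full_rank A \<longleftrightarrow> invertible (A ** transpose A)"
proof
  assume "full_rank A"
  then have "rank (transpose A) = CARD('m)"
    using assms by (simp add: full_rank_def rank_transpose min_def)
  then have inj: "inj ((*v) (transpose A))" using full_rank_injective by blast
  have "x = 0" if "(A ** transpose A) *v x = 0" for x
  proof -
    have "A *v (transpose A *v x) = 0"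
      using that by (metis matrix_vector_mul_assoc)
    moreover have "(transpose A *v x) \<bullet> (transpose A *v x) = x \<bullet> (A *v (transpose A *v x))"
      by (simp add: dot_lmul_matrix)
    ultimately have "(transpose A *v x) \<bullet> (transpose A *v x) = 0" by simp
    then have "transpose A *v x = 0" by simp
    then show "x = 0" using inj by (metis inj_eq matrix_vector_mult_0_right)
  qed
  then have "inj ((*v) (A ** transpose A))"
    by (simp add: linear_injective_0[OF matrix_vector_mul_linear])
  then show "invertible (A ** transpose A)"
    using matrix_left_invertible_injective invertible_left_inverse by blast
next
  assume "invertible (A ** transpose A)"
  then have "rank (A ** transpose A) = CARD('m)"
    using full_rank_injective inj_matrix_vector_mult by blast
  moreover have "rank (A ** transpose A) \<le> rank A" by (rule rank_mul_le_left)
  moreover have "rank A \<le> min CARD('m) CARD('n)" by (rule rank_bound)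
  ultimately show "full_rank A" unfolding full_rank_def using assms by (simp add: min_def)
qed

lemma pinv_in_ginvs:
  fixes A :: "real ^ 'n ^ 'm"
  assumes "invertible (A ** transpose A)"
  shows "pinv A \<in> ginvs A"
  using matrix_inv_invertible[OF assms] unfolding ginvs_def pinv_def
  by (simp add: matrix_mul_assoc)

definition diag_mat :: "('m \<Rightarrow> 'a::zero) \<Rightarrow> 'a ^ 'm ^ 'm" where
  "diag_mat d = (\<chi> i j. if i = j then d i else 0)"

lemma diag_mat_mult: "diag_mat d ** diag_mat e = diag_mat (\<lambda>i. d i * e i)"
  for d e :: "'m::finite \<Rightarrow> 'a::semiring_1"
proof -
  have "(\<Sum>k\<in>UNIV. (if i = k then d i else 0) * (if k = j then e k else 0))
      = (if i = j then d i * e i else 0)" for i j :: 'm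
    by (cases "i = j") (simp_all add: if_distrib if_distribR cong: if_cong)
  then show ?thesis by (simp add: diag_mat_def matrix_matrix_mult_def vec_eq_iff)
qed

lemma
  fixes d :: "'m::finite \<Rightarrow> 'a::field"
  assumes "\<And>i. d i \<noteq> 0"
  shows matrix_inv_diag_mat: "matrix_inv (diag_mat d) = diag_mat (\<lambda>i. 1 / d i)"
    and invertible_diag_mat: "invertible (diag_mat d)"
proof -
  have "diag_mat d ** diag_mat (\<lambda>i. 1 / d i) = mat 1"
    unfolding diag_mat_mult using assms by (simp add: diag_mat_def mat_def)
  then show "matrix_inv (diag_mat d) = diag_mat (\<lambda>i. 1 / d i)" "invertible (diag_mat d)"
    using matrix_inv_eqI invertible_right_inverse by blast+
qed

lemma pinv_of_diagonal_gram:
  fixes A :: "real ^ 'n ^ 'm"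
  assumes "A ** transpose A = diag_mat d" "\<And>i. d i \<noteq> 0"
  shows "pinv A = (\<chi> k i. A $ i $ k / d i)"
proof -
  have "(\<Sum>l\<in>UNIV. A $ l $ k * (if l = i then 1 / d l else 0)) = A $ i $ k / d i" for k i
    by (simp add: if_distrib cong: if_cong)
  then show ?thesis
    unfolding pinv_def assms(1) matrix_inv_diag_mat[OF assms(2)]
    by (simp add: diag_mat_def matrix_matrix_mult_def vec_eq_iff transpose_def)
qed

section \<open>Optimality of the pseudoinverse for \<open>p = q = 2\<close>\<close>

lemma frobenius_projection_le:
  fixes P Q :: "real ^ 'n ^ 'n"
  assumes sym: "transpose P = P" and idem: "P ** P = P" and PQ: "P ** Q = P"
  shows "(\<Sum>i\<in>UNIV. \<Sum>j\<in>UNIV. (P $ i $ j)\<^sup>2) \<le> (\<Sum>i\<in>UNIV. \<Sum>j\<in>UNIV. (Q $ i $ j)\<^sup>2)"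
proof -
  define R where "R = Q - P"
  have "P ** R = 0"
    using PQ idem matrix_add_ldistrib[of P P R] by (simp add: R_def)
  have P_sym: "P $ i $ j = P $ j $ i" for i j
    using sym by (metis transpose_def vec_lambda_beta)
  \<comment> \<open>\<open>P\<close> and \<open>R\<close> are orthogonal for the trace inner product: \<open>tr(P\<^sup>T R) = tr(P R) = 0\<close>\<close>
  have "(\<Sum>i\<in>UNIV. \<Sum>j\<in>UNIV. P $ i $ j * R $ i $ j) = (\<Sum>j\<in>UNIV. \<Sum>i\<in>UNIV. P $ j $ i * R $ i $ j)"
    by (subst sum.swap) (simp add: P_sym)
  also have "\<dots> = (\<Sum>j\<in>UNIV. (P ** R) $ j $ j)" by (simp add: matrix_matrix_mult_def)
  finally have cross: "(\<Sum>i\<in>UNIV. \<Sum>j\<in>UNIV. P $ i $ j * R $ i $ j) = 0"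
    using \<open>P ** R = 0\<close> by simp
  have "(Q $ i $ j)\<^sup>2 = (P $ i $ j)\<^sup>2 + 2 * (P $ i $ j * R $ i $ j) + (R $ i $ j)\<^sup>2" for i j
    by (simp add: R_def power2_eq_square algebra_simps)
  then have "(\<Sum>i\<in>UNIV. \<Sum>j\<in>UNIV. (Q $ i $ j)\<^sup>2) = (\<Sum>i\<in>UNIV. \<Sum>j\<in>UNIV. (P $ i $ j)\<^sup>2)
      + 2 * (\<Sum>i\<in>UNIV. \<Sum>j\<in>UNIV. P $ i $ j * R $ i $ j) + (\<Sum>i\<in>UNIV. \<Sum>j\<in>UNIV. (R $ i $ j)\<^sup>2)"
    by (simp add: sum.distrib sum_distrib_left)
  then show ?thesis using cross by (simp add: sum_nonneg)
qed

lemma pinv_in_pginv_row_2_2: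
  fixes A :: "real ^ 'n ^ 'm"
  assumes "CARD('m) \<le> CARD('n)" "full_rank A"
  shows "pinv A \<in> pginv_row 2 2 A"
proof -
  let ?M = "A ** transpose A" and ?P = "pinv A ** A"
  have inv: "invertible ?M" using assms full_rank_iff_invertible_gram by blast
  note M_inv = matrix_inv_invertible[OF inv]
  have "transpose (matrix_inv ?M) ** ?M = mat 1"
    by (metis M_inv(1) matrix_transpose_mul transpose_mat transpose_transpose)
  then have inv_sym: "transpose (matrix_inv ?M) = matrix_inv ?M"
    by (metis M_inv(1) matrix_mul_assoc matrix_mul_lid matrix_mul_rid)
  have P_sym: "transpose ?P = ?P"
    by (simp add: pinv_def matrix_transpose_mul inv_sym matrix_mul_assoc)
  have P_absorbs: "?P ** (Y ** A) = ?P" if "Y \<in> ginvs A" for Y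
  proof -
    have "?P ** (Y ** A) = transpose A ** matrix_inv ?M ** (A ** Y) ** A"
      by (simp add: pinv_def matrix_mul_assoc)
    then show ?thesis using that by (simp add: ginvs_def pinv_def)
  qed
  have "pinv A \<in> ginvs A" using inv by (rule pinv_in_ginvs)
  then show ?thesis
    using P_absorbs frobenius_projection_le[OF P_sym P_absorbs]
    by (simp add: pginv_row_iff_row_objective[of 2 2, simplified] row_objective_2_2)
qed

lemma DERIV_nonzero_not_local_min:
  fixes f :: "real \<Rightarrow> real"
  assumes "DERIV f x :> l" "l \<noteq> 0" "0 < d"
  shows "\<exists>y. \<bar>x - y\<bar> < d \<and> f y < f x"
  using DERIV_local_min[OF assms(1,3)] assms(2) by force

text \<open>
  The pseudoinverse solution \<open>(1/5, 2/5)\<close> of \<open>a + 2b = 1\<close> minimises \<open>|a|\<^sup>q + |b|\<^sup>q\<close> only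
  for \<open>q = 2\<close>: along the line the derivative is \<open>q 5\<^sup>1\<^sup>-\<^sup>q (2 - 2\<^sup>q\<^sup>-\<^sup>1)\<close>.
\<close>
lemma fifths_not_min_on_line:
  fixes q :: real
  assumes "0 < q" "q \<noteq> 2"
  shows "\<exists>t. \<bar>1/5 + 2*t\<bar> powr q + \<bar>2/5 - t\<bar> powr q < (1/5) powr q + (2/5) powr q"
proof -
  let ?f = "\<lambda>t::real. (1/5 + 2*t) powr q + (2/5 - t) powr q"
  have d1: "DERIV (\<lambda>t::real. 1/5 + 2*t) 0 :> 2" and d2: "DERIV (\<lambda>t::real. 2/5 - t) 0 :> -1"
    by (auto intro!: derivative_eq_intros)
  have D: "DERIV ?f 0 :> q * (1/5) powr (q - 1) * 2 + q * (2/5) powr (q - 1) * (-1)"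
    using DERIV_add[OF DERIV_fun_powr[OF d1, of q] DERIV_fun_powr[OF d2, of q]] by simp
  have "(2/5::real) powr (q - 1) = 2 powr (q - 1) * (1/5) powr (q - 1)"
    by (simp add: powr_mult[symmetric])
  then have l: "q * (1/5) powr (q - 1) * 2 + q * (2/5) powr (q - 1) * (-1)
      = q * (1/5) powr (q - 1) * (2 - 2 powr (q - 1))"
    by (simp add: algebra_simps)
  have "(2::real) powr (q - 1) \<noteq> 2 powr 1"
    using assms powr_inj[of 2 "q - 1" 1] by simp
  then have "q * (1/5) powr (q - 1) * 2 + q * (2/5) powr (q - 1) * (-1) \<noteq> 0"
    unfolding l using assms by simp
  then obtain t where t: "\<bar>0 - t\<bar> < 1/10" "?f t < ?f 0"
    using DERIV_nonzero_not_local_min[OF D, of "1/10"] by auto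
  then have "\<bar>1/5 + 2*t\<bar> = 1/5 + 2*t" "\<bar>2/5 - t\<bar> = 2/5 - t" by auto
  then show ?thesis using t(2) by (intro exI[of _ t]) simp
qed

lemma mean_powr_le_mean_of_powr:
  fixes y :: "'a \<Rightarrow> real"
  assumes "finite S" "S \<noteq> {}" "\<forall>i\<in>S. 0 < y i" "1 \<le> r"
  shows "((\<Sum>i\<in>S. y i) / card S) powr r \<le> (\<Sum>i\<in>S. y i powr r) / card S"
proof -
  have "(\<Sum>i\<in>S. (1 / card S) *\<^sub>R y i) powr r \<le> (\<Sum>i\<in>S. (1 / card S) * y i powr r)"
    using convex_on_sum[OF assms(1,2) powr_convex[OF assms(4)], of "\<lambda>_. 1 / card S" y] assms(1,2,3)
    by simp
  then show ?thesis by (simp add: sum_divide_distrib[symmetric])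
qed

lemma power_mean_5_1_2_ge:
  fixes p :: real
  assumes "2 \<le> p"
  shows "10 \<le> ((5 powr p + 1 + 2 powr p) / 3) powr (2/p)"
proof -
  have "(((25::real) + 1 + 4) / 3) powr (p/2) \<le> (25 powr (p/2) + 1 + 4 powr (p/2)) / 3"
    using mean_powr_le_mean_of_powr[of "{25, 1, 4}" id "p/2"] assms by simp
  moreover have "(25::real) powr (p/2) = 5 powr p" "(4::real) powr (p/2) = 2 powr p"
    using powr_powr[of 5 2 "p/2"] powr_powr[of 2 2 "p/2"] by (simp_all add: powr_numeral)
  ultimately have "10 powr (p/2) \<le> (5 powr p + 1 + 2 powr p) / 3" by (simp add: add_ac)
  then have "(10 powr (p/2)) powr (2/p) \<le> ((5 powr p + 1 + 2 powr p) / 3) powr (2/p)"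
    using assms by (intro powr_mono2) auto
  then show ?thesis using assms by (simp add: powr_powr)
qed

lemma power_mean_5_1_2_le:
  fixes p :: real
  assumes "1 \<le> p" "p \<le> 2"
  shows "((5 powr p + 1 + 2 powr p) / 3) powr (2/p) \<le> 10"
proof -
  have "(((5::real) powr p + 1 + 2 powr p) / 3) powr (2/p) \<le> (25 + 1 + 4) / 3"
    using mean_powr_le_mean_of_powr[of "{5, 1, 2 :: real}" "\<lambda>i. i powr p" "2/p"] assms
    by (simp add: add_ac powr_powr powr_numeral)
  then show ?thesis by simp
qed

lemma power_mean_5_1_2_slope_nonzero:
  fixes p :: real
  assumes "1 \<le> p" "p \<noteq> 2"
  defines "S \<equiv> 5 powr p + 1 + 2 powr p"
  defines "W \<equiv> 5 powr (p - 1) + 2 powr (p - 1) - 1"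
  shows "S powr (2/p - 1) * W \<noteq> 2 * 3 powr (2/p)"
proof -
  have S_pos: "S > 0" unfolding S_def by (simp add: add_pos_nonneg)
  have "(5::real) powr (p - 1) \<ge> 1" using assms(1) by (intro ge_one_powr_ge_zero) auto
  moreover have "(2::real) powr (p - 1) > 0" by simp
  ultimately have W_pos: "W > 0" unfolding W_def by linarith
  define M where "M = (S/3) powr (2/p)"
  have "S powr (2/p) = 3 powr (2/p) * M"
    unfolding M_def by (metis powr_mult times_divide_eq_right nonzero_mult_div_cancel_left zero_neq_numeral)
  then have lhs: "S powr (2/p - 1) * W = 3 powr (2/p) * (M * W / S)"
    using S_pos by (simp add: powr_diff)
  have "(5::real) powr (p - 1) = 5 powr p / 5" "(2::real) powr (p - 1) = 2 powr p / 2"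
    by (simp_all add: powr_diff)
  \<comment> \<open>so \<open>M W / S\<close> is compared with \<open>2\<close> through \<open>M\<close> vs \<open>10\<close> and \<open>2\<^sup>p\<close> vs \<open>4\<close>\<close>
  then have W_vs_S: "10 * W - 2 * S = 3 * 2 powr p - 12" unfolding W_def S_def by simp
  have "M * W / S \<noteq> 2"
  proof (cases "p > 2")
    case True
    have "(2::real) powr 2 < 2 powr p" using True by (intro powr_less_mono) auto
    then have "10 * W > 2 * S" using W_vs_S by (simp add: powr_numeral)
    moreover have "10 * W \<le> M * W"
      using power_mean_5_1_2_ge[of p] True W_pos unfolding M_def S_def by (intro mult_right_mono) auto
    ultimately have "M * W > 2 * S" by linarith
    then show ?thesis using S_pos by (simp add: field_simps)
  next
    case False
    then have "p < 2" using assms by simp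
    then have "(2::real) powr p < 2 powr 2" by (intro powr_less_mono) auto
    then have "10 * W < 2 * S" using W_vs_S by (simp add: powr_numeral)
    moreover have "M * W \<le> 10 * W"
      using power_mean_5_1_2_le[of p] assms \<open>p < 2\<close> W_pos unfolding M_def S_def
      by (intro mult_right_mono) auto
    ultimately have "M * W < 2 * S" by linarith
    then show ?thesis using S_pos by (simp add: field_simps)
  qed
  then show ?thesis
    unfolding lhs by (metis mult.commute mult_left_cancel powr_eq_0_iff zero_neq_numeral)
qed

text \<open>
  The row objective for \<open>q = 2\<close> of \<open>X(t) A\<^sub>5\<close> up to the additive constant \<open>m - 2\<close>, where
  \<open>X(t)\<close> is the line of generalized inverses through \<open>X(0) = A\<^sub>5\<^sup>\<dagger>\<close> defined below.
\<close>
definition phi5 :: "real \<Rightarrow> real \<Rightarrow> real" where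
  "phi5 p t = 2 * (\<bar>5/6 + t\<bar> powr p + \<bar>t - 1/6\<bar> powr p + \<bar>1/3 + t\<bar> powr p) powr (2/p)
     + (3 * \<bar>2*t - 1/3\<bar> powr p) powr (2/p)"

lemma phi5_rescaled:
  fixes p s :: real
  assumes "0 < p" "\<bar>s\<bar> < 1"
  shows "phi5 p (s/6) = (2 * ((5+s) powr p + (1-s) powr p + (2+s) powr p) powr (2/p)
            + 3 powr (2/p) * (2 - 2 * s)\<^sup>2) / 36"
proof -
  have abs_eqs: "\<bar>5/6 + s/6\<bar> = (5+s)/6" "\<bar>s/6 - 1/6\<bar> = (1-s)/6" "\<bar>1/3 + s/6\<bar> = (2+s)/6"
      "\<bar>2*(s/6) - 1/3\<bar> = (2-2 * s)/6" using assms by auto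
  have six: "((6::real) powr p) powr (2/p) = 36" using assms by (simp add: powr_powr powr_numeral)
  have "(\<bar>5/6 + s/6\<bar> powr p + \<bar>s/6 - 1/6\<bar> powr p + \<bar>1/3 + s/6\<bar> powr p) powr (2/p)
       = (((5+s) powr p + (1-s) powr p + (2+s) powr p) / 6 powr p) powr (2/p)"
  proof -
    have "\<bar>5/6 + s/6\<bar> powr p + \<bar>s/6 - 1/6\<bar> powr p + \<bar>1/3 + s/6\<bar> powr p
        = ((5+s) powr p + (1-s) powr p + (2+s) powr p) / 6 powr p"
      unfolding abs_eqs powr_divide by (simp add: add_divide_distrib)
    then show ?thesis by simp
  qed
  also have "\<dots> = ((5+s) powr p + (1-s) powr p + (2+s) powr p) powr (2/p) / 36"
    unfolding powr_divide six ..
  finally have first: "(\<bar>5/6 + s/6\<bar> powr p + \<bar>s/6 - 1/6\<bar> powr p + \<bar>1/3 + s/6\<bar> powr p) powr (2/p)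
     = ((5+s) powr p + (1-s) powr p + (2+s) powr p) powr (2/p) / 36" .
  have "(3 * \<bar>2*(s/6) - 1/3\<bar> powr p) powr (2/p) = 3 powr (2/p) * ((2-2 * s) powr p) powr (2/p) / 36"
    unfolding abs_eqs powr_divide by (simp add: powr_mult powr_divide six)
  also have "((2-2 * s) powr p) powr (2/p) = (2-2 * s)\<^sup>2"
    using assms by (simp add: powr_powr powr_numeral)
  finally have second: "(3 * \<bar>2*(s/6) - 1/3\<bar> powr p) powr (2/p) = 3 powr (2/p) * (2-2 * s)\<^sup>2 / 36" .
  show ?thesis unfolding phi5_def first second by simp
qed

lemma phi5_not_min_at_0:
  fixes p :: real
  assumes "1 \<le> p" "p \<noteq> 2"
  shows "\<exists>t. phi5 p t < phi5 p 0"
proof -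
  define S where "S = 5 powr p + 1 + 2 powr p"
  define W where "W = 5 powr (p - 1) + 2 powr (p - 1) - 1"
  define U where "U s = (5+s) powr p + (1-s) powr p + (2+s) powr p" for s :: real
  define \<Psi> where "\<Psi> s = 2 * U s powr (2/p) + 3 powr (2/p) * (2 - 2 * s)\<^sup>2" for s :: real
  have "0 < p" using assms by simp
  have "DERIV U 0 :> p * 5 powr (p - 1) * 1 + p * 1 powr (p - 1) * (-1) + p * 2 powr (p - 1) * 1"
    unfolding U_def by (intro DERIV_add DERIV_fun_powr) (auto intro!: derivative_eq_intros)
  then have dU: "DERIV U 0 :> p * W" unfolding W_def by (simp add: algebra_simps)
  have "U 0 = S" "S > 0" unfolding U_def S_def by (simp_all add: add_pos_nonneg)
  then have "DERIV (\<lambda>s. U s powr (2/p)) 0 :> (2/p) * S powr (2/p - 1) * (p * W)"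
    using DERIV_fun_powr[OF dU, of "2/p"] by simp
  moreover have "DERIV (\<lambda>s::real. (2 - 2 * s)\<^sup>2) 0 :> -8"
    by (auto intro!: derivative_eq_intros)
  ultimately have d\<Psi>: "DERIV \<Psi> 0 :> 2 * ((2/p) * S powr (2/p - 1) * (p * W)) + 3 powr (2/p) * (-8)"
    unfolding \<Psi>_def by (intro DERIV_add DERIV_cmult)
  have "2 * ((2/p) * S powr (2/p - 1) * (p * W)) + 3 powr (2/p) * (-8)
      = 4 * (S powr (2/p - 1) * W - 2 * 3 powr (2/p))"
    using \<open>0 < p\<close> by (simp add: field_simps)
  also have "\<dots> \<noteq> 0"
    using power_mean_5_1_2_slope_nonzero[OF assms] unfolding S_def W_def by (simp add: mult.commute)
  finally obtain s where s: "\<bar>0 - s\<bar> < 1/2" "\<Psi> s < \<Psi> 0"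
    using DERIV_nonzero_not_local_min[OF d\<Psi>, of "1/2"] by auto
  have "phi5 p (s/6) = \<Psi> s / 36" "phi5 p (0/6) = \<Psi> 0 / 36"
    using phi5_rescaled[OF \<open>0 < p\<close>, of s] phi5_rescaled[OF \<open>0 < p\<close>, of 0] s(1)
    by (simp_all add: \<Psi>_def U_def)
  then show ?thesis using s(2) by (intro exI[of _ "s/6"]) simp
qed

lemma exists_inj_not_surj:
  assumes "CARD('m::finite) < CARD('n::finite)"
  shows "\<exists>(g::'m \<Rightarrow> 'n) c. inj g \<and> c \<notin> range g"
proof -
  obtain g :: "'m \<Rightarrow> 'n" where "inj g"
    using card_le_inj[of "UNIV :: 'm set" "UNIV :: 'n set"] assms by auto
  moreover have "range g \<noteq> UNIV"
    using card_image[OF \<open>inj g\<close>] assms by (metis less_irrefl)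
  ultimately show ?thesis by blast
qed

lemma sum_UNIV_ones_outside:
  fixes f :: "'m::finite \<Rightarrow> real"
  assumes "\<forall>i. i \<notin> S \<longrightarrow> f i = 1"
  shows "sum f UNIV = sum f S + real (CARD('m) - card S)"
proof -
  have "sum f UNIV = sum f S + sum f (UNIV - S)"
    by (metis add.commute finite sum.subset_diff top_greatest)
  also have "sum f (UNIV - S) = real (card (UNIV - S))" using assms by simp
  also have "card (UNIV - S) = CARD('m) - card S" by (simp add: card_Diff_subset)
  finally show ?thesis .
qed

lemma sum_UNIV_ge_ones_outside:
  fixes f :: "'m::finite \<Rightarrow> real"
  assumes "\<forall>i. i \<notin> S \<longrightarrow> 1 \<le> f i"
  shows "sum f S + real (CARD('m) - card S) \<le> sum f UNIV"
proof -
  have "sum f UNIV = sum f S + sum f (UNIV - S)"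
    by (metis add.commute finite sum.subset_diff top_greatest)
  moreover have "real (card (UNIV - S)) \<le> sum f (UNIV - S)"
    using sum_bounded_below[of "UNIV - S" 1 f] assms by simp
  moreover have "card (UNIV - S) = CARD('m) - card S" by (simp add: card_Diff_subset)
  ultimately show ?thesis by simp
qed

lemma sum_mult_delta_right: "(\<Sum>i\<in>UNIV. f i * (if i = l then a else 0)) = f l * a"
  for f :: "'b::finite \<Rightarrow> 'a::semiring_0"
  by (simp add: if_distrib cong: if_cong)

lemma sum_mult_delta_left: "(\<Sum>i\<in>UNIV. (if i = l then a else 0) * f i) = a * f l"
  for f :: "'b::finite \<Rightarrow> 'a::semiring_0"
proof -
  have "(\<lambda>i. (if i = l then a else 0) * f i) = (\<lambda>i. if i = l then a * f l else 0)" by auto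
  then show ?thesis by (simp only:) (simp add: sum.delta)
qed

lemma if_zero_powr:
  "(if b then a else 0) powr p = (if b then a powr p else 0)"
  "\<bar>if b then a else 0\<bar> powr p = (if b then \<bar>a\<bar> powr p else 0)" for a :: real
  by simp_all

locale column_embedding =
  fixes g :: "'m::finite \<Rightarrow> 'n::finite" and c :: 'n
  assumes inj_g: "inj g" and c_notin_range: "c \<notin> range g"
begin

lemma g_neq_c [simp]: "g i \<noteq> c" "c \<noteq> g i"
  using c_notin_range by auto

lemma g_eq_iff [simp]: "g i = g j \<longleftrightarrow> i = j"
  using inj_g by (auto dest: injD)

lemma sum_UNIV_eq:
  fixes h :: "'n \<Rightarrow> real"
  assumes "\<And>k. k \<notin> range g \<Longrightarrow> k \<noteq> c \<Longrightarrow> h k = 0"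
  shows "sum h UNIV = h c + (\<Sum>i\<in>UNIV. h (g i))"
proof -
  have "sum h UNIV = sum h (insert c (range g))"
    by (rule sum.mono_neutral_right) (use assms in auto)
  also have "\<dots> = h c + (\<Sum>i\<in>UNIV. h (g i))"
    using c_notin_range sum.reindex[OF inj_g] by simp
  finally show ?thesis .
qed

lemma sum_UNIV_ge:
  fixes h :: "'n \<Rightarrow> real"
  assumes "\<And>k. 0 \<le> h k"
  shows "h c + (\<Sum>i\<in>UNIV. h (g i)) \<le> sum h UNIV"
proof -
  have "h c + (\<Sum>i\<in>UNIV. h (g i)) = sum h (insert c (range g))"
    using c_notin_range sum.reindex[OF inj_g, of h] by simp
  also have "\<dots> \<le> sum h UNIV" by (rule sum_mono2) (use assms in auto)
  finally show ?thesis .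
qed

end

section \<open>The matrix \<open>A\<^sub>4\<close>: the pseudoinverse is optimal only for \<open>q = 2\<close>\<close>

text \<open>
  \<open>A\<^sub>4 = [I | 2e\<^sub>i\<^sub>1]\<close>, with the identity block in the columns \<open>g i\<close> and the extra
  column \<open>c\<close>; all other columns vanish.
\<close>
definition A4_mat :: "('m \<Rightarrow> 'n) \<Rightarrow> 'n \<Rightarrow> 'm \<Rightarrow> real ^ 'n ^ 'm" where
  "A4_mat g c i1 = (\<chi> i j. (if j = g i then 1 else 0) + (if i = i1 \<and> j = c then 2 else 0))"

definition A4_ginv :: "('m \<Rightarrow> 'n) \<Rightarrow> 'n \<Rightarrow> 'm \<Rightarrow> real \<Rightarrow> real \<Rightarrow> real ^ 'm ^ 'n" where
  "A4_ginv g c i1 a b = (\<chi> k i. if i = i1 then (if k = g i1 then a else if k = c then b else 0)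
      else (if k = g i then 1 else 0))"

context column_embedding
begin

lemma A4_mat_entries:
  "A4_mat g c i1 $ i $ g l = (if i = l then 1 else 0)"
  "A4_mat g c i1 $ i $ c = (if i = i1 then 2 else 0)"
  "j \<notin> range g \<Longrightarrow> j \<noteq> c \<Longrightarrow> A4_mat g c i1 $ i $ j = 0"
  by (auto simp: A4_mat_def)

lemma A4_mat_mult:
  "(A4_mat g c i1 ** X) $ i $ j = X $ (g i) $ j + (if i = i1 then 2 * X $ c $ j else 0)"
proof -
  have "(A4_mat g c i1 ** X) $ i $ j = (\<Sum>k\<in>UNIV. (if k = g i then 1 else 0) * X $ k $ j
       + (if k = c then (if i = i1 then 2 else 0) else 0) * X $ k $ j)"
    by (simp add: matrix_matrix_mult_def A4_mat_def distrib_right)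
  then show ?thesis by (simp only: sum.distrib sum_mult_delta_left) simp
qed

lemma mult_A4_mat:
  "(X ** A4_mat g c i1) $ k $ (g l) = X $ k $ l"
  "(X ** A4_mat g c i1) $ k $ c = 2 * X $ k $ i1"
  "j \<notin> range g \<Longrightarrow> j \<noteq> c \<Longrightarrow> (X ** A4_mat g c i1) $ k $ j = 0"
  by (simp_all add: matrix_matrix_mult_def A4_mat_entries sum_mult_delta_right)

lemma abs_powr_sum_mult_A4_mat:
  "abs_powr_sum p ((X ** A4_mat g c i1) $ k)
     = 2 powr p * \<bar>X $ k $ i1\<bar> powr p + (\<Sum>l\<in>UNIV. \<bar>X $ k $ l\<bar> powr p)"
proof -
  have "abs_powr_sum p ((X ** A4_mat g c i1) $ k) = \<bar>(X ** A4_mat g c i1) $ k $ c\<bar> powr p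
      + (\<Sum>l\<in>UNIV. \<bar>(X ** A4_mat g c i1) $ k $ (g l)\<bar> powr p)"
    unfolding abs_powr_sum_def by (rule sum_UNIV_eq) (simp add: mult_A4_mat)
  then show ?thesis by (simp add: mult_A4_mat abs_mult powr_mult)
qed

lemma gram_A4_mat:
  "A4_mat g c i1 ** transpose (A4_mat g c i1) = diag_mat (\<lambda>i. if i = i1 then 5 else 1)"
  by (simp add: vec_eq_iff A4_mat_mult transpose_def A4_mat_entries diag_mat_def)

lemma pinv_A4_mat: "pinv (A4_mat g c i1) = A4_ginv g c i1 (1/5) (2/5)"
proof -
  have "pinv (A4_mat g c i1) = (\<chi> k i. A4_mat g c i1 $ i $ k / (if i = i1 then 5 else 1))"
    by (rule pinv_of_diagonal_gram[OF gram_A4_mat]) simp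
  then show ?thesis by (simp add: vec_eq_iff A4_mat_def A4_ginv_def)
qed

lemma full_rank_A4_mat:
  assumes "CARD('m) \<le> CARD('n)"
  shows "full_rank (A4_mat g c i1)"
  using assms by (simp add: full_rank_iff_invertible_gram gram_A4_mat invertible_diag_mat)

lemma A4_ginv_entries:
  "A4_ginv g c i1 a b $ g i1 $ l = (if l = i1 then a else 0)"
  "A4_ginv g c i1 a b $ c $ l = (if l = i1 then b else 0)"
  "i \<noteq> i1 \<Longrightarrow> A4_ginv g c i1 a b $ g i $ l = (if l = i then 1 else 0)"
  "k \<notin> range g \<Longrightarrow> k \<noteq> c \<Longrightarrow> A4_ginv g c i1 a b $ k $ l = 0"
  by (auto simp: A4_ginv_def)

lemma A4_ginv_in_ginvs:
  assumes "a + 2 * b = 1"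
  shows "A4_ginv g c i1 a b \<in> ginvs (A4_mat g c i1)"
  using assms by (simp add: ginvs_def vec_eq_iff A4_mat_mult A4_ginv_entries mat_def)

lemma row_objective_A4_ginv:
  assumes "0 < p" "0 < q"
  shows "row_objective p q (A4_ginv g c i1 a b ** A4_mat g c i1)
    = (1 + 2 powr p) powr (q/p) * (\<bar>a\<bar> powr q + \<bar>b\<bar> powr q) + real (CARD('m) - 1)"
proof -
  let ?X = "A4_ginv g c i1 a b"
  let ?h = "\<lambda>k. abs_powr_sum p ((?X ** A4_mat g c i1) $ k) powr (q/p)"
  have rows: "abs_powr_sum p ((?X ** A4_mat g c i1) $ g i1) = (1 + 2 powr p) * \<bar>a\<bar> powr p"
    "abs_powr_sum p ((?X ** A4_mat g c i1) $ c) = (1 + 2 powr p) * \<bar>b\<bar> powr p"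
    "i \<noteq> i1 \<Longrightarrow> abs_powr_sum p ((?X ** A4_mat g c i1) $ g i) = 1"
    "k \<notin> range g \<Longrightarrow> k \<noteq> c \<Longrightarrow> abs_powr_sum p ((?X ** A4_mat g c i1) $ k) = 0" for i k
    using assms by (simp_all add: abs_powr_sum_mult_A4_mat A4_ginv_entries if_zero_powr algebra_simps)
  have "row_objective p q (?X ** A4_mat g c i1) = ?h c + (\<Sum>i\<in>UNIV. ?h (g i))"
    unfolding row_objective_def by (rule sum_UNIV_eq) (simp add: rows)
  also have "(\<Sum>i\<in>UNIV. ?h (g i)) = ?h (g i1) + real (CARD('m) - 1)"
    using sum_UNIV_ones_outside[of "{i1}" "\<lambda>i. ?h (g i)"] by (simp add: rows)
  also have "?h c = (1 + 2 powr p) powr (q/p) * \<bar>b\<bar> powr q"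
    using assms by (simp add: rows powr_mult powr_powr)
  also have "?h (g i1) = (1 + 2 powr p) powr (q/p) * \<bar>a\<bar> powr q"
    using assms by (simp add: rows powr_mult powr_powr)
  finally show ?thesis by (simp add: algebra_simps)
qed

lemma row_objective_2_mult_A4_mat_ge:
  assumes "0 < p" and X: "X \<in> ginvs (A4_mat g c i1)"
  shows "(1 + 2 powr p) powr (2/p) * ((X $ g i1 $ i1)\<^sup>2 + (X $ c $ i1)\<^sup>2) + real (CARD('m) - 1)
    \<le> row_objective p 2 (X ** A4_mat g c i1)"
proof -
  let ?h = "\<lambda>k. abs_powr_sum p ((X ** A4_mat g c i1) $ k) powr (2/p)"
  let ?K = "(1 + 2 powr p) powr (2/p)"
  have entry_le: "\<bar>X $ k $ l\<bar> powr p \<le> (\<Sum>l\<in>UNIV. \<bar>X $ k $ l\<bar> powr p)" for k l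
    by (rule member_le_sum) auto
  have row_ge: "?K * (X $ k $ i1)\<^sup>2 \<le> ?h k" for k
  proof -
    have "(1 + 2 powr p) * \<bar>X $ k $ i1\<bar> powr p \<le> abs_powr_sum p ((X ** A4_mat g c i1) $ k)"
      using entry_le[of k i1] by (simp add: abs_powr_sum_mult_A4_mat algebra_simps)
    then have "((1 + 2 powr p) * \<bar>X $ k $ i1\<bar> powr p) powr (2/p) \<le> ?h k"
      using assms(1) by (intro powr_mono2) auto
    then show ?thesis using assms(1) by (simp add: powr_mult powr_powr powr_numeral)
  qed
  have row_ge_1: "1 \<le> ?h (g i)" if "i \<noteq> i1" for i
  proof -
    have "(A4_mat g c i1 ** X) $ i $ i = 1" using X by (simp add: ginvs_def mat_def)
    then have "X $ g i $ i = 1" using that by (simp add: A4_mat_mult)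
    then have "1 \<le> abs_powr_sum p ((X ** A4_mat g c i1) $ g i)"
      using entry_le[of "g i" i] by (simp add: abs_powr_sum_mult_A4_mat add_increasing)
    then have "1 powr (2/p) \<le> ?h (g i)" using assms(1) by (intro powr_mono2) auto
    then show ?thesis by simp
  qed
  have "?h c + (\<Sum>i\<in>UNIV. ?h (g i)) \<le> row_objective p 2 (X ** A4_mat g c i1)"
    unfolding row_objective_def by (rule sum_UNIV_ge) simp
  moreover have "?h (g i1) + real (CARD('m) - 1) \<le> (\<Sum>i\<in>UNIV. ?h (g i))"
    using sum_UNIV_ge_ones_outside[of "{i1}" "\<lambda>i. ?h (g i)"] row_ge_1 by simp
  ultimately show ?thesis
    using row_ge[of c] row_ge[of "g i1"] by (simp add: algebra_simps)
qed

lemma pinv_A4_mat_in_pginv_row_2: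
  assumes "0 < p"
  shows "pinv (A4_mat g c i1) \<in> pginv_row (ereal p) 2 (A4_mat g c i1)"
proof -
  let ?K = "(1 + 2 powr p) powr (2/p)"
  have "row_objective p 2 (pinv (A4_mat g c i1) ** A4_mat g c i1) \<le> row_objective p 2 (Y ** A4_mat g c i1)"
    if Y: "Y \<in> ginvs (A4_mat g c i1)" for Y
  proof -
    have "(A4_mat g c i1 ** Y) $ i1 $ i1 = 1" using Y by (simp add: ginvs_def mat_def)
    then have "Y $ g i1 $ i1 + 2 * Y $ c $ i1 = 1" by (simp add: A4_mat_mult)
    \<comment> \<open>Cauchy-Schwarz on the line \<open>x + 2y = 1\<close>\<close>
    moreover have "(x + 2 * y)\<^sup>2 \<le> 5 * (x\<^sup>2 + y\<^sup>2)" for x y :: real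
      using sum_squares_ge_zero[of "2 * x - y" 0] by (simp add: power2_eq_square algebra_simps)
    ultimately have "1/5 \<le> (Y $ g i1 $ i1)\<^sup>2 + (Y $ c $ i1)\<^sup>2"
      by (metis power_one divide_le_eq_numeral1(1) mult.commute)
    then have "?K * (1/5) \<le> ?K * ((Y $ g i1 $ i1)\<^sup>2 + (Y $ c $ i1)\<^sup>2)"
      by (intro mult_left_mono) auto
    then show ?thesis
      using row_objective_2_mult_A4_mat_ge[OF assms Y] assms
      by (simp add: pinv_A4_mat row_objective_A4_ginv powr_numeral power2_eq_square)
  qed
  moreover have "pinv (A4_mat g c i1) \<in> ginvs (A4_mat g c i1)"
    unfolding pinv_A4_mat by (rule A4_ginv_in_ginvs) simp
  ultimately have "pinv (A4_mat g c i1) \<in> pginv_row (ereal p) (ereal 2) (A4_mat g c i1)"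
    using pginv_row_iff_row_objective[of p 2] assms by auto
  then show ?thesis by simp
qed

lemma pinv_A4_mat_in_pginv_row_iff:
  assumes "0 < p" "0 < q"
  shows "pinv (A4_mat g c i1) \<in> pginv_row (ereal p) (ereal q) (A4_mat g c i1) \<longleftrightarrow> q = 2"
proof
  assume opt: "pinv (A4_mat g c i1) \<in> pginv_row (ereal p) (ereal q) (A4_mat g c i1)"
  show "q = 2"
  proof (rule ccontr)
    assume "q \<noteq> 2"
    then obtain t where t: "\<bar>1/5 + 2*t\<bar> powr q + \<bar>2/5 - t\<bar> powr q < (1/5) powr q + (2/5) powr q"
      using fifths_not_min_on_line assms by blast
    have "A4_ginv g c i1 (1/5 + 2*t) (2/5 - t) \<in> ginvs (A4_mat g c i1)"
      by (rule A4_ginv_in_ginvs) simp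
    then have "row_objective p q (pinv (A4_mat g c i1) ** A4_mat g c i1)
        \<le> row_objective p q (A4_ginv g c i1 (1/5 + 2*t) (2/5 - t) ** A4_mat g c i1)"
      using opt pginv_row_iff_row_objective[OF assms] by blast
    moreover have "0 < (1 + 2 powr p) powr (q/p)"
      by (metis add_pos_nonneg powr_gt_zero powr_ge_zero zero_less_one less_irrefl)
    ultimately show False
      using t by (simp add: pinv_A4_mat row_objective_A4_ginv[OF assms])
  qed
next
  assume "q = 2"
  then show "pinv (A4_mat g c i1) \<in> pginv_row (ereal p) (ereal q) (A4_mat g c i1)"
    using pinv_A4_mat_in_pginv_row_2[OF assms(1)] by simp
qed

end

lemma exists_pinv_optimal_iff_q_2:
  assumes "CARD('m) < CARD('n)"
  shows "\<exists>A :: real ^ 'n ^ 'm. full_rank A \<and>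
    (\<forall>p q. 0 < p \<longrightarrow> 0 < q \<longrightarrow> (pinv A \<in> pginv_row (ereal p) (ereal q) A \<longleftrightarrow> q = 2))"
proof -
  obtain g :: "'m \<Rightarrow> 'n" and c where "column_embedding g c"
    using exists_inj_not_surj[OF assms] column_embedding.intro by blast
  then show ?thesis
    using column_embedding.full_rank_A4_mat column_embedding.pinv_A4_mat_in_pginv_row_iff assms
    by (metis less_imp_le)
qed

section \<open>The matrix \<open>A\<^sub>5\<close>: the pseudoinverse is optimal for \<open>q = 2\<close> only if \<open>p = 2\<close>\<close>

definition A5_mat :: "('m \<Rightarrow> 'n) \<Rightarrow> 'n \<Rightarrow> 'm \<Rightarrow> 'm \<Rightarrow> real ^ 'n ^ 'm" where
  "A5_mat g c i1 i2 = (\<chi> i j. (if j = g i then 1 else 0) + (if i = i1 \<and> j = g i2 then -1 else 0)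
      + (if i = i2 \<and> j = g i1 then 1 else 0) + (if i = i2 \<and> j = c then -1 else 0))"

text \<open>
  \<open>X(t) = A\<^sub>5\<^sup>\<dagger> + t (e\<^sub>g\<^sub>i\<^sub>1 + e\<^sub>g\<^sub>i\<^sub>2 + 2e\<^sub>c) e\<^sub>i\<^sub>2\<^sup>T\<close>, moving column \<open>i2\<close> along the kernel of \<open>A\<^sub>5\<close>.
\<close>
definition A5_ginv :: "('m \<Rightarrow> 'n) \<Rightarrow> 'n \<Rightarrow> 'm \<Rightarrow> 'm \<Rightarrow> real \<Rightarrow> real ^ 'm ^ 'n" where
  "A5_ginv g c i1 i2 t = (\<chi> k i.
      if i = i1 then (if k = g i1 then 1/2 else if k = g i2 then -1/2 else 0)
      else if i = i2 then (if k = g i1 then 1/3 + t else if k = g i2 then 1/3 + t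
        else if k = c then -1/3 + 2*t else 0)
      else (if k = g i then 1 else 0))"

lemma sum_abs_powr_two_deltas:
  fixes a b :: "'m::finite"
  assumes "a \<noteq> b"
  shows "(\<Sum>l\<in>UNIV. \<bar>if l = a then u else if l = b then v else 0\<bar> powr p) = \<bar>u::real\<bar> powr p + \<bar>v\<bar> powr p"
proof -
  have "(\<lambda>l. \<bar>if l = a then u else if l = b then v else 0\<bar> powr p)
      = (\<lambda>l. (if l = a then \<bar>u\<bar> powr p else 0) + (if l = b then \<bar>v\<bar> powr p else 0))"
    using assms by auto
  then show ?thesis by (simp only:) (simp add: sum.distrib)
qed

locale two_rows_embedding = column_embedding g c
  for g :: "'m::finite \<Rightarrow> 'n::finite" and c :: 'n +
  fixes i1 i2 :: 'm
  assumes i1_neq_i2: "i1 \<noteq> i2"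
begin

lemma i1_i2_distinct [simp]: "i1 \<noteq> i2" "i2 \<noteq> i1"
  using i1_neq_i2 by auto

lemma A5_mat_entries:
  "A5_mat g c i1 i2 $ i $ g l = (if i = l then 1 else 0) + (if i = i1 \<and> l = i2 then -1 else 0)
     + (if i = i2 \<and> l = i1 then 1 else 0)"
  "A5_mat g c i1 i2 $ i $ c = (if i = i2 then -1 else 0)"
  "j \<notin> range g \<Longrightarrow> j \<noteq> c \<Longrightarrow> A5_mat g c i1 i2 $ i $ j = 0"
  by (auto simp: A5_mat_def)

lemma A5_mat_mult:
  "(A5_mat g c i1 i2 ** X) $ i $ j = X $ g i $ j + (if i = i1 then - X $ g i2 $ j else 0)
     + (if i = i2 then X $ g i1 $ j - X $ c $ j else 0)"
proof -
  have "(A5_mat g c i1 i2 ** X) $ i $ j = (\<Sum>k\<in>UNIV. (if k = g i then 1 else 0) * X $ k $ j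
       + (if k = g i2 then (if i = i1 then -1 else 0) else 0) * X $ k $ j
       + (if k = g i1 then (if i = i2 then 1 else 0) else 0) * X $ k $ j
       + (if k = c then (if i = i2 then -1 else 0) else 0) * X $ k $ j)"
    by (simp add: matrix_matrix_mult_def A5_mat_def distrib_right)
  then show ?thesis by (simp only: sum.distrib sum_mult_delta_left) simp
qed

lemma mult_A5_mat:
  "(X ** A5_mat g c i1 i2) $ k $ g l = X $ k $ l + (if l = i2 then - X $ k $ i1 else 0)
     + (if l = i1 then X $ k $ i2 else 0)"
  "(X ** A5_mat g c i1 i2) $ k $ c = - X $ k $ i2"
  "j \<notin> range g \<Longrightarrow> j \<noteq> c \<Longrightarrow> (X ** A5_mat g c i1 i2) $ k $ j = 0"
proof -
  have "(X ** A5_mat g c i1 i2) $ k $ g l = (\<Sum>i\<in>UNIV. X $ k $ i * (if i = l then 1 else 0)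
      + X $ k $ i * (if i = i1 then (if l = i2 then -1 else 0) else 0)
      + X $ k $ i * (if i = i2 then (if l = i1 then 1 else 0) else 0))"
    by (simp add: matrix_matrix_mult_def A5_mat_entries distrib_left)
  then show "(X ** A5_mat g c i1 i2) $ k $ g l = X $ k $ l + (if l = i2 then - X $ k $ i1 else 0)
     + (if l = i1 then X $ k $ i2 else 0)"
    by (simp only: sum.distrib sum_mult_delta_right) simp
qed (simp_all add: matrix_matrix_mult_def A5_mat_entries sum_mult_delta_right)

lemma gram_A5_mat:
  "A5_mat g c i1 i2 ** transpose (A5_mat g c i1 i2) = diag_mat (\<lambda>i. if i = i1 then 2 else if i = i2 then 3 else 1)"
  by (simp add: vec_eq_iff A5_mat_mult transpose_def A5_mat_entries diag_mat_def)

lemma pinv_A5_mat: "pinv (A5_mat g c i1 i2) = A5_ginv g c i1 i2 0"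
proof -
  have "pinv (A5_mat g c i1 i2)
      = (\<chi> k i. A5_mat g c i1 i2 $ i $ k / (if i = i1 then 2 else if i = i2 then 3 else 1))"
    by (rule pinv_of_diagonal_gram[OF gram_A5_mat]) simp
  then show ?thesis by (simp add: vec_eq_iff A5_mat_def A5_ginv_def)
qed

lemma full_rank_A5_mat:
  assumes "CARD('m) \<le> CARD('n)"
  shows "full_rank (A5_mat g c i1 i2)"
  using assms by (simp add: full_rank_iff_invertible_gram gram_A5_mat invertible_diag_mat)

lemma A5_ginv_in_ginvs: "A5_ginv g c i1 i2 t \<in> ginvs (A5_mat g c i1 i2)"
  by (simp add: ginvs_def vec_eq_iff A5_mat_mult A5_ginv_def mat_def)

lemma row_objective_A5_ginv:
  assumes "0 < p"
  shows "row_objective p 2 (A5_ginv g c i1 i2 t ** A5_mat g c i1 i2) = phi5 p t + real (CARD('m) - 2)"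
proof -
  let ?XA = "A5_ginv g c i1 i2 t ** A5_mat g c i1 i2"
  let ?h = "\<lambda>k. abs_powr_sum p (?XA $ k) powr (2/p)"
  have XA_g: "?XA $ g i1 $ g l = (if l = i1 then 5/6 + t else if l = i2 then t - 1/6 else 0)"
    "?XA $ g i2 $ g l = (if l = i1 then t - 1/6 else if l = i2 then 5/6 + t else 0)"
    "?XA $ c $ g l = (if l = i1 then 2*t - 1/3 else if l = i2 then 2*t - 1/3 else 0)"
    "i \<noteq> i1 \<Longrightarrow> i \<noteq> i2 \<Longrightarrow> ?XA $ g i $ g l = (if l = i then 1 else 0)"
    "k \<notin> range g \<Longrightarrow> k \<noteq> c \<Longrightarrow> ?XA $ k $ g l = 0" for i k l
    by (auto simp: mult_A5_mat A5_ginv_def)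
  have XA_c: "?XA $ g i1 $ c = - (1/3 + t)" "?XA $ g i2 $ c = - (1/3 + t)"
    "?XA $ c $ c = 1/3 - 2*t"
    "i \<noteq> i1 \<Longrightarrow> i \<noteq> i2 \<Longrightarrow> ?XA $ g i $ c = 0"
    "k \<notin> range g \<Longrightarrow> k \<noteq> c \<Longrightarrow> ?XA $ k $ c = 0" for i k
    by (auto simp: mult_A5_mat A5_ginv_def)
  have abs_powr_sum_eq: "abs_powr_sum p (?XA $ k) = \<bar>?XA $ k $ c\<bar> powr p + (\<Sum>l\<in>UNIV. \<bar>?XA $ k $ g l\<bar> powr p)" for k
    unfolding abs_powr_sum_def by (rule sum_UNIV_eq) (simp add: mult_A5_mat)
  have rows: "abs_powr_sum p (?XA $ g i1) = \<bar>5/6 + t\<bar> powr p + \<bar>t - 1/6\<bar> powr p + \<bar>1/3 + t\<bar> powr p"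
    "abs_powr_sum p (?XA $ g i2) = \<bar>5/6 + t\<bar> powr p + \<bar>t - 1/6\<bar> powr p + \<bar>1/3 + t\<bar> powr p"
    "abs_powr_sum p (?XA $ c) = 3 * \<bar>2*t - 1/3\<bar> powr p"
    "i \<noteq> i1 \<Longrightarrow> i \<noteq> i2 \<Longrightarrow> abs_powr_sum p (?XA $ g i) = 1"
    "k \<notin> range g \<Longrightarrow> k \<noteq> c \<Longrightarrow> abs_powr_sum p (?XA $ k) = 0" for i k
    using assms by (simp_all add: abs_powr_sum_eq XA_g XA_c sum_abs_powr_two_deltas if_zero_powr
        abs_minus_commute[of "1/3"] abs_minus_cancel[of "1/3 + t", simplified])
  have "row_objective p 2 ?XA = ?h c + (\<Sum>i\<in>UNIV. ?h (g i))"
    unfolding row_objective_def by (rule sum_UNIV_eq) (simp add: rows)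
  also have "(\<Sum>i\<in>UNIV. ?h (g i)) = ?h (g i1) + ?h (g i2) + real (CARD('m) - 2)"
    using sum_UNIV_ones_outside[of "{i1, i2}" "\<lambda>i. ?h (g i)"] by (simp add: rows)
  finally show ?thesis unfolding phi5_def using rows by simp
qed

lemma pinv_A5_mat_in_pginv_row_2_iff:
  assumes "CARD('m) \<le> CARD('n)" "1 \<le> p"
  shows "pinv (A5_mat g c i1 i2) \<in> pginv_row (ereal p) 2 (A5_mat g c i1 i2) \<longleftrightarrow> p = 2"
proof
  have "0 < p" using assms by simp
  assume "pinv (A5_mat g c i1 i2) \<in> pginv_row (ereal p) 2 (A5_mat g c i1 i2)"
  then have "pinv (A5_mat g c i1 i2) \<in> pginv_row (ereal p) (ereal 2) (A5_mat g c i1 i2)" by simp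
  then have opt: "row_objective p 2 (pinv (A5_mat g c i1 i2) ** A5_mat g c i1 i2)
      \<le> row_objective p 2 (A5_ginv g c i1 i2 t ** A5_mat g c i1 i2)" for t
    using pginv_row_iff_row_objective[of p 2] A5_ginv_in_ginvs \<open>0 < p\<close> by auto
  show "p = 2"
  proof (rule ccontr)
    assume "p \<noteq> 2"
    then obtain t where "phi5 p t < phi5 p 0" using phi5_not_min_at_0 assms by blast
    then show False
      using opt[of t] by (simp add: pinv_A5_mat row_objective_A5_ginv[OF \<open>0 < p\<close>])
  qed
next
  assume "p = 2"
  then show "pinv (A5_mat g c i1 i2) \<in> pginv_row (ereal p) 2 (A5_mat g c i1 i2)"
    using pinv_in_pginv_row_2_2[OF assms(1) full_rank_A5_mat[OF assms(1)]] by simp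
qed

end

lemma exists_pinv_optimal_iff_p_2:
  assumes "CARD('m) < CARD('n)" "2 \<le> CARD('m)"
  shows "\<exists>A :: real ^ 'n ^ 'm. full_rank A \<and>
    (\<forall>p. 1 \<le> p \<longrightarrow> (pinv A \<in> pginv_row (ereal p) 2 A \<longleftrightarrow> p = 2))"
proof -
  obtain g :: "'m \<Rightarrow> 'n" and c where "column_embedding g c"
    using exists_inj_not_surj[OF assms(1)] column_embedding.intro by blast
  moreover obtain i1 i2 :: 'm where "i1 \<noteq> i2"
    using assms(2) by (metis card_2_iff' ex_card)
  ultimately have "two_rows_embedding g c i1 i2"
    by (simp add: two_rows_embedding_def two_rows_embedding_axioms_def)
  then show ?thesis
    using two_rows_embedding.full_rank_A5_mat two_rows_embedding.pinv_A5_mat_in_pginv_row_2_iff assms(1)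
    by (metis less_imp_le)
qed

section \<open>Matrices with a single row\<close>

lemma lp_norm_nonneg: "0 \<le> lp_norm p v"
proof (cases "p = \<infinity>")
  case True
  have "\<bar>v $ j\<bar> \<le> Max (range (\<lambda>j. \<bar>v $ j\<bar>))" for j by (rule Max_ge) auto
  then show ?thesis using True abs_ge_zero order_trans by (metis lp_norm_def)
qed (simp add: lp_norm_def)

lemma lp_norm_pos:
  assumes "0 < p" "v \<noteq> 0"
  shows "0 < lp_norm p v"
proof -
  obtain j0 where j0: "v $ j0 \<noteq> 0" using assms(2) by (metis vec_eq_iff zero_index)
  show ?thesis
  proof (cases "p = \<infinity>")
    case True
    have "\<bar>v $ j0\<bar> \<le> Max (range (\<lambda>j. \<bar>v $ j\<bar>))" by (rule Max_ge) auto
    moreover have "0 < \<bar>v $ j0\<bar>" using j0 by simp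
    ultimately have "0 < Max (range (\<lambda>j. \<bar>v $ j\<bar>))" by linarith
    then show ?thesis using True by (simp add: lp_norm_def)
  next
    case False
    then obtain r where r: "p = ereal r" "0 < r" using assms by (cases p) auto
    have "0 < \<bar>v $ j0\<bar> powr r" using j0 by simp
    also have "\<dots> \<le> (\<Sum>j\<in>UNIV. \<bar>v $ j\<bar> powr r)" by (rule member_le_sum) auto
    finally show ?thesis using r by (simp add: lp_norm_def)
  qed
qed

lemma lp_norm_abs_cong: "(\<And>j. \<bar>v $ j\<bar> = \<bar>w $ j\<bar>) \<Longrightarrow> lp_norm p v = lp_norm p w"
  by (simp add: lp_norm_def)

lemma lp_norm_scale:
  assumes "0 < p"
  shows "lp_norm p (\<chi> j. a * v $ j) = \<bar>a\<bar> * lp_norm p v"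
proof (cases "p = \<infinity>")
  case True
  have "mono (\<lambda>x::real. \<bar>a\<bar> * x)" by (rule monoI) (simp add: mult_left_mono)
  then have "Max ((\<lambda>x. \<bar>a\<bar> * x) ` range (\<lambda>j. \<bar>v $ j\<bar>)) = \<bar>a\<bar> * Max (range (\<lambda>j. \<bar>v $ j\<bar>))"
    by (rule mono_Max_commute[symmetric]) auto
  then show ?thesis using True by (simp add: lp_norm_def image_image abs_mult)
next
  case False
  then obtain r where r: "p = ereal r" "0 < r" using assms by (cases p) auto
  have "(\<Sum>j\<in>UNIV. \<bar>a * v $ j\<bar> powr r) = \<bar>a\<bar> powr r * (\<Sum>j\<in>UNIV. \<bar>v $ j\<bar> powr r)"
    by (simp add: abs_mult powr_mult sum_distrib_left)
  then have "(\<Sum>j\<in>UNIV. \<bar>a * v $ j\<bar> powr r) powr (1/r)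
      = (\<bar>a\<bar> powr r) powr (1/r) * (\<Sum>j\<in>UNIV. \<bar>v $ j\<bar> powr r) powr (1/r)"
    by (simp add: powr_mult)
  also have "(\<bar>a\<bar> powr r) powr (1/r) = \<bar>a\<bar>" using r by (simp add: powr_powr)
  finally show ?thesis using r by (simp add: lp_norm_def)
qed

context
  fixes i0 :: "'m::finite"
  assumes single_row: "(UNIV :: 'm set) = {i0}"
begin

lemma entry_norm_single_column: "entry_norm q (X :: real ^ 'm ^ 'n) = lp_norm q (\<chi> k. X $ k $ i0)"
proof (cases "q = \<infinity>")
  case True
  have "range (\<lambda>(k, i). \<bar>X $ k $ i\<bar>) = range (\<lambda>k. \<bar>X $ k $ i0\<bar>)"
  proof
    show "range (\<lambda>(k, i). \<bar>X $ k $ i\<bar>) \<subseteq> range (\<lambda>k. \<bar>X $ k $ i0\<bar>)"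
    proof clarify
      fix k i
      have "i = i0" using single_row by auto
      then show "\<bar>X $ k $ i\<bar> \<in> range (\<lambda>k. \<bar>X $ k $ i0\<bar>)" by simp
    qed
    show "range (\<lambda>k. \<bar>X $ k $ i0\<bar>) \<subseteq> range (\<lambda>(k, i). \<bar>X $ k $ i\<bar>)"
      by (auto intro: image_eqI[of _ _ "(_, i0)"])
  qed
  then show ?thesis using True by (simp add: entry_norm_def lp_norm_def)
next
  case False
  have "(\<Sum>(k, i)\<in>UNIV. \<bar>X $ k $ i\<bar> powr real_of_ereal q) = (\<Sum>k\<in>UNIV. \<Sum>i\<in>UNIV. \<bar>X $ k $ i\<bar> powr real_of_ereal q)"
    by (simp add: sum.cartesian_product)
  also have "\<dots> = (\<Sum>k\<in>UNIV. \<bar>X $ k $ i0\<bar> powr real_of_ereal q)" by (simp add: single_row)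
  finally show ?thesis using False by (simp add: entry_norm_def lp_norm_def)
qed

text \<open>\<open>XA = x a\<^sup>T\<close> for the column \<open>x\<close> of \<open>X\<close> and the row \<open>a\<close> of \<open>A\<close>, and the row norm is homogeneous.\<close>
lemma row_norm_mult_single_row:
  assumes "0 < p" "0 < q"
  shows "row_norm p q (X ** (A :: real ^ 'n ^ 'm)) = lp_norm p (A $ i0) * entry_norm q X"
proof -
  have "(X ** A) $ k = (\<chi> j. X $ k $ i0 * A $ i0 $ j)" for k
    by (simp add: matrix_matrix_mult_def vec_eq_iff single_row)
  then have "row_norm p q (X ** A) = lp_norm q (\<chi> k. lp_norm p (\<chi> j. X $ k $ i0 * A $ i0 $ j))"
    by (simp add: row_norm_def)
  also have "\<dots> = lp_norm q (\<chi> k. lp_norm p (A $ i0) * X $ k $ i0)"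
    by (rule lp_norm_abs_cong) (simp add: lp_norm_scale[OF assms(1), of _ "A $ i0", simplified]
        abs_mult lp_norm_nonneg)
  also have "\<dots> = lp_norm p (A $ i0) * lp_norm q (\<chi> k. X $ k $ i0)"
    using lp_norm_scale[OF assms(2), of "lp_norm p (A $ i0)" "\<chi> k. X $ k $ i0"]
    by (simp add: abs_of_nonneg lp_norm_nonneg)
  finally show ?thesis by (simp add: entry_norm_single_column)
qed

end

lemma pginv_row_eq_ginv_one_row:
  assumes "CARD('m) = 1" "0 < p" "0 < q"
  shows "pginv_row p q (A :: real ^ 'n ^ 'm) = ginv q A"
proof (cases "ginvs A = {}")
  case False
  obtain i0 :: 'm where single_row: "UNIV = {i0}" using card_1_singletonE[OF assms(1)] by blast
  obtain X where "A ** X = mat 1" using False by (auto simp: ginvs_def)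
  then have "(A ** X) $ i0 $ i0 = 1" by (simp add: mat_def)
  then have "A $ i0 \<noteq> 0" by (auto simp: matrix_matrix_mult_def single_row)
  then have "0 < lp_norm p (A $ i0)" using lp_norm_pos assms by blast
  then show ?thesis
    by (simp add: pginv_row_def ginv_def row_norm_mult_single_row[OF single_row assms(2,3)])
qed (simp add: pginv_row_def ginv_def)

lemma single_row_pinv_optimal_iff:
  assumes "CARD('m) < CARD('n)" "CARD('m) = 1"
  shows "\<exists>A :: real ^ 'n ^ 'm. full_rank A \<and>
    (\<forall>p q. 0 < p \<longrightarrow> 0 < q \<longrightarrow> q < \<infinity> \<longrightarrow> (pinv A \<in> pginv_row p q A \<longleftrightarrow> q = 2))"
proof -
  obtain A :: "real ^ 'n ^ 'm" where A: "full_rank A"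
    "\<And>p q. 0 < p \<Longrightarrow> 0 < q \<Longrightarrow> pinv A \<in> pginv_row (ereal p) (ereal q) A \<longleftrightarrow> q = 2"
    using exists_pinv_optimal_iff_q_2[OF assms(1)] by blast
  have finite_q: "pinv A \<in> pginv_row p (ereal r) A \<longleftrightarrow> r = 2" if "0 < p" "0 < r" for p r
  proof -
    \<comment> \<open>with a single row, \<open>pginv_row p q = ginv q\<close> does not depend on \<open>p\<close>\<close>
    have "0 < ereal r" using that by simp
    then have "pginv_row p (ereal r) A = pginv_row (ereal 2) (ereal r) A"
      using pginv_row_eq_ginv_one_row[OF assms(2)] \<open>0 < p\<close> by (metis zero_less_numeral ereal_less(2))
    then show ?thesis using A(2)[of 2 r] that by simp
  qed
  show ?thesis
  proof (intro exI conjI allI impI)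
    fix p q :: ereal
    assume "0 < p" "0 < q" "q < \<infinity>"
    then obtain r where "q = ereal r" "0 < r" by (cases q) auto
    then show "pinv A \<in> pginv_row p q A \<longleftrightarrow> q = 2" using finite_q \<open>0 < p\<close> by simp
  qed (fact A(1))
qed

lemma pinv_optimal_for_all_full_rank_iff:
  assumes "CARD('m) < CARD('n)" "2 \<le> CARD('m)" "1 \<le> p" "0 < q"
  shows "(\<forall>A :: real ^ 'n ^ 'm. full_rank A \<longrightarrow> pinv A \<in> pginv_row (ereal p) (ereal q) A)
    \<longleftrightarrow> p = 2 \<and> q = 2"
proof
  assume all: "\<forall>A :: real ^ 'n ^ 'm. full_rank A \<longrightarrow> pinv A \<in> pginv_row (ereal p) (ereal q) A"
  have "q = 2"
    using exists_pinv_optimal_iff_q_2[OF assms(1)] all assms(3,4) by auto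
  moreover have "p = 2"
    using exists_pinv_optimal_iff_p_2[OF assms(1,2)] all assms(3) calculation by auto
  ultimately show "p = 2 \<and> q = 2" by simp
next
  assume "p = 2 \<and> q = 2"
  then show "\<forall>A :: real ^ 'n ^ 'm. full_rank A \<longrightarrow> pinv A \<in> pginv_row (ereal p) (ereal q) A"
    using pinv_in_pginv_row_2_2[where 'm = 'm and 'n = 'n] assms(1) by simp
qed

theorem theorem4:
  assumes mn: "CARD('m) < CARD('n)"
  shows
   "(CARD('m) = 1 \<longrightarrow>
      (\<forall>(A :: real ^ 'n ^ 'm) p q. 0 < p \<longrightarrow> 0 < q \<longrightarrow> pginv_row p q A = ginv q A) \<and>
      (\<exists>A1 :: real ^ 'n ^ 'm. full_rank A1 \<and>
         (\<forall>p q. 0 < p \<longrightarrow> 0 < q \<longrightarrow> q < \<infinity> \<longrightarrow>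
            (pinv A1 \<in> pginv_row p q A1 \<longleftrightarrow> q = 2))))
    \<and> (CARD('m) \<ge> 2 \<longrightarrow>
      (\<exists>A4 :: real ^ 'n ^ 'm. full_rank A4 \<and>
         (\<forall>p q :: real. 1 \<le> p \<longrightarrow> 0 < q \<longrightarrow>
            (pinv A4 \<in> pginv_row (ereal p) (ereal q) A4 \<longleftrightarrow> q = 2))))
    \<and> (CARD('m) \<ge> 3 \<longrightarrow>
      (\<exists>A5 :: real ^ 'n ^ 'm. full_rank A5 \<and>
         (\<forall>p :: real. 1 \<le> p \<longrightarrow>
            (pinv A5 \<in> pginv_row (ereal p) 2 A5 \<longleftrightarrow> p = 2))))
    \<and> (CARD('m) \<ge> 3 \<longrightarrow>
      (\<forall>p q :: real. 1 \<le> p \<longrightarrow> 0 < q \<longrightarrow>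
         ((\<forall>A :: real ^ 'n ^ 'm. full_rank A \<longrightarrow> pinv A \<in> pginv_row (ereal p) (ereal q) A)
          \<longleftrightarrow> p = 2 \<and> q = 2)))"
  using pginv_row_eq_ginv_one_row[where 'm = 'm and 'n = 'n] single_row_pinv_optimal_iff[OF mn]
    exists_pinv_optimal_iff_q_2[OF mn] exists_pinv_optimal_iff_p_2[OF mn]
    pinv_optimal_for_all_full_rank_iff[OF mn]
  by auto

end
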